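(* For every connected graph $G$, $\gamma_{rdR}(G)\ge \gamma(G)+\gamma_r(G)$. Moreover, equality holds if and only if $G$ is a star $K_{1,m}$ for some $m\ge 1$, or $\gamma_{r2}(G)=\gamma_r(G)=\gamma(G)$.
   Context: All graphs are finite and simple. An RDRD function of $G$ is a function $f:V(G)\to\{0,1,2,3\}$ such that every vertex with value $0$ has at least two neighbors with value $2$ or at least one neighbor with value $3$, every vertex with value $1$ has a neighbor with value $2$ or $3$, and the subgraph induced by the vertices with value $0$ has no isolated vertices; $\gamma_{rdR}(G)$ is the minimum of $\sum_v f(v)$ over RDRD functions. $\gamma(G)$ is the domination number. A restrained dominating set is a set $S\subseteq V(G)$ such that every vertex of $V(G)\setminus S$ has a neighbor in $S$ and a neighbor in $V(G)\setminus S$; $\gamma_r(G)$ is its minimum cardinality. A restrained $2$-dominating set is a set $S$ such that every vertex of $V(G)\setminus S$ has at least two neighbors in $S$ and $G[V(G)\setminus S]$ has no isolated vertices; $\gamma_{r2}(G)$ is its minimum cardinality. *)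

theory Defs
  imports Main
begin

definition graph :: "'a set \<Rightarrow> 'a set set \<Rightarrow> bool" where
  "graph V E \<longleftrightarrow> finite V \<and> (\<forall>e\<in>E. e \<subseteq> V \<and> card e = 2)"

definition adj :: "'a set set \<Rightarrow> 'a \<Rightarrow> 'a \<Rightarrow> bool" where
  "adj E u v \<longleftrightarrow> {u, v} \<in> E"

definition nbrs :: "'a set \<Rightarrow> 'a set set \<Rightarrow> 'a \<Rightarrow> 'a set" where
  "nbrs V E v = {u \<in> V. adj E v u}"

definition connected_graph :: "'a set \<Rightarrow> 'a set set \<Rightarrow> bool" where
  "connected_graph V E \<longleftrightarrow> graph V E \<and> V \<noteq> {} \<and>
     (\<forall>u\<in>V. \<forall>v\<in>V. (adj E)\<^sup>*\<^sup>* u v)"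

definition is_star :: "'a set \<Rightarrow> 'a set set \<Rightarrow> nat \<Rightarrow> bool" where
  "is_star V E m \<longleftrightarrow> (\<exists>c\<in>V. card V = m + 1 \<and> E = {{c, v} | v. v \<in> V - {c}})"

definition dominating_set :: "'a set \<Rightarrow> 'a set set \<Rightarrow> 'a set \<Rightarrow> bool" where
  "dominating_set V E S \<longleftrightarrow> S \<subseteq> V \<and> (\<forall>v\<in>V - S. nbrs V E v \<inter> S \<noteq> {})"

definition domination_number :: "'a set \<Rightarrow> 'a set set \<Rightarrow> nat" where
  "domination_number V E = (LEAST k. \<exists>S. dominating_set V E S \<and> card S = k)"

definition restrained_dominating_set :: "'a set \<Rightarrow> 'a set set \<Rightarrow> 'a set \<Rightarrow> bool" where
  "restrained_dominating_set V E S \<longleftrightarrow> S \<subseteq> V \<and>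
     (\<forall>v\<in>V - S. nbrs V E v \<inter> S \<noteq> {} \<and> nbrs V E v \<inter> (V - S) \<noteq> {})"

definition restrained_domination_number :: "'a set \<Rightarrow> 'a set set \<Rightarrow> nat" where
  "restrained_domination_number V E =
     (LEAST k. \<exists>S. restrained_dominating_set V E S \<and> card S = k)"

definition restrained_2dominating_set :: "'a set \<Rightarrow> 'a set set \<Rightarrow> 'a set \<Rightarrow> bool" where
  "restrained_2dominating_set V E S \<longleftrightarrow> S \<subseteq> V \<and>
     (\<forall>v\<in>V - S. card (nbrs V E v \<inter> S) \<ge> 2 \<and> nbrs V E v \<inter> (V - S) \<noteq> {})"

definition restrained_2domination_number :: "'a set \<Rightarrow> 'a set set \<Rightarrow> nat" where
  "restrained_2domination_number V E =
     (LEAST k. \<exists>S. restrained_2dominating_set V E S \<and> card S = k)"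

text \<open>Restrained double Roman dominating (RDRD) functions; values in {0,1,2,3},
  the function is only relevant on V.\<close>
definition rdrd_function :: "'a set \<Rightarrow> 'a set set \<Rightarrow> ('a \<Rightarrow> nat) \<Rightarrow> bool" where
  "rdrd_function V E f \<longleftrightarrow>
     (\<forall>v\<in>V. f v \<le> 3) \<and>
     (\<forall>v\<in>V. f v = 0 \<longrightarrow>
        (card {u \<in> nbrs V E v. f u = 2} \<ge> 2 \<or> (\<exists>u\<in>nbrs V E v. f u = 3))) \<and>
     (\<forall>v\<in>V. f v = 1 \<longrightarrow> (\<exists>u\<in>nbrs V E v. f u \<ge> 2)) \<and>
     (\<forall>v\<in>V. f v = 0 \<longrightarrow> (\<exists>u\<in>nbrs V E v. f u = 0))"

definition rdrd_number :: "'a set \<Rightarrow> 'a set set \<Rightarrow> nat" where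
  "rdrd_number V E = (LEAST w. \<exists>f. rdrd_function V E f \<and> (\<Sum>v\<in>V. f v) = w)"

end

theory Submission
  imports Defs
begin

text \<open>For a minimum RDRD function f, the vertices of positive value form a restrained
  dominating set and those of value at least 2 a dominating set, and the weight of f is
  the sum of their sizes plus the number of vertices of value 3. In case of equality no
  vertex has value 3 and both sets are minimum. If no vertex has value 1 then the
  vertices of value 2 form a restrained 2-dominating set of size gamma, which squeezes
  gamma_r2 = gamma_r = gamma. Otherwise minimality forbids removing vertices from
  either set, which pins down the neighbourhood of a vertex of value 1: it is a centre
  all of whose neighbours are leaves, and connectivity makes G a star. Conversely,
  stars and graphs with gamma_r2 = gamma_r = gamma carry RDRD functions of weight
  gamma + gamma_r.\<close>

lemma nbrs_in_V: "u \<in> nbrs V E v \<Longrightarrow> u \<in> V"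
  by (auto simp: nbrs_def)

lemma nbrs_sym: "u \<in> nbrs V E v \<Longrightarrow> v \<in> V \<Longrightarrow> v \<in> nbrs V E u"
  by (auto simp: nbrs_def adj_def insert_commute)

lemma nbrs_irrefl: "graph V E \<Longrightarrow> u \<in> nbrs V E v \<Longrightarrow> u \<noteq> v"
  by (auto simp: nbrs_def adj_def graph_def)

lemma card_ge_2_obtain_other: "2 \<le> card A \<Longrightarrow> \<exists>x\<in>A. x \<noteq> a"
  by (metis card.infinite card_le_Suc0_iff_eq not_less_eq_eq numeral_2_eq_2 zero_le)

lemma dominating_set_iff:
  "dominating_set V E S \<longleftrightarrow> S \<subseteq> V \<and> (\<forall>v\<in>V - S. \<exists>u\<in>nbrs V E v. u \<in> S)"
  unfolding dominating_set_def by (auto simp: disjoint_iff nbrs_def)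

lemma restrained_dominating_set_iff:
  "restrained_dominating_set V E S \<longleftrightarrow>
     S \<subseteq> V \<and> (\<forall>v\<in>V - S. (\<exists>u\<in>nbrs V E v. u \<in> S) \<and> (\<exists>u\<in>nbrs V E v. u \<notin> S))"
  unfolding restrained_dominating_set_def by (auto simp: disjoint_iff nbrs_def)

lemma restrained_dominating_set_nbr_in:
  "restrained_dominating_set V E S \<Longrightarrow> v \<in> V \<Longrightarrow> v \<notin> S \<Longrightarrow> \<exists>u\<in>nbrs V E v. u \<in> S"
  unfolding restrained_dominating_set_iff by blast

lemma restrained_dominating_set_nbr_out:
  "restrained_dominating_set V E S \<Longrightarrow> v \<in> V \<Longrightarrow> v \<notin> S \<Longrightarrow> \<exists>u\<in>nbrs V E v. u \<notin> S"
  unfolding restrained_dominating_set_iff by blast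

lemma ex_min_dominating_set:
  "finite V \<Longrightarrow> \<exists>S. dominating_set V E S \<and> card S = domination_number V E"
  unfolding domination_number_def by (rule LeastI_ex) (auto simp: dominating_set_def)

lemma domination_number_le: "dominating_set V E S \<Longrightarrow> domination_number V E \<le> card S"
  unfolding domination_number_def by (rule Least_le) blast

lemma ex_min_restrained_dominating_set:
  "finite V \<Longrightarrow> \<exists>S. restrained_dominating_set V E S \<and> card S = restrained_domination_number V E"
  unfolding restrained_domination_number_def
  by (rule LeastI_ex) (auto simp: restrained_dominating_set_def)

lemma restrained_domination_number_le:
  "restrained_dominating_set V E S \<Longrightarrow> restrained_domination_number V E \<le> card S"
  unfolding restrained_domination_number_def by (rule Least_le) blast

lemma ex_min_restrained_2dominating_set:
  "finite V \<Longrightarrow>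
    \<exists>S. restrained_2dominating_set V E S \<and> card S = restrained_2domination_number V E"
  unfolding restrained_2domination_number_def
  by (rule LeastI_ex) (auto simp: restrained_2dominating_set_def)

lemma restrained_2domination_number_le:
  "restrained_2dominating_set V E S \<Longrightarrow> restrained_2domination_number V E \<le> card S"
  unfolding restrained_2domination_number_def by (rule Least_le) blast

lemma ex_min_rdrd_function: "\<exists>f. rdrd_function V E f \<and> sum f V = rdrd_number V E"
  unfolding rdrd_number_def
  by (rule LeastI_ex[where P="\<lambda>w. \<exists>f. rdrd_function V E f \<and> sum f V = w"])
     (rule exI, rule exI[of _ "\<lambda>_. 2"], simp add: rdrd_function_def)

lemma rdrd_number_le: "rdrd_function V E f \<Longrightarrow> rdrd_number V E \<le> sum f V"
  unfolding rdrd_number_def by (rule Least_le) blast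

lemma domination_number_le_restrained:
  "finite V \<Longrightarrow> domination_number V E \<le> restrained_domination_number V E"
  by (metis domination_number_le ex_min_restrained_dominating_set restrained_dominating_set_def
      dominating_set_def)

lemma restrained_domination_number_le_2:
  "finite V \<Longrightarrow> restrained_domination_number V E \<le> restrained_2domination_number V E"
proof -
  assume "finite V"
  then obtain S where S: "restrained_2dominating_set V E S"
    and card_S: "card S = restrained_2domination_number V E"
    using ex_min_restrained_2dominating_set by blast
  have "restrained_dominating_set V E S"
    using S unfolding restrained_2dominating_set_def restrained_dominating_set_def
    by (metis card.empty not_numeral_le_zero)
  then show ?thesis using card_S restrained_domination_number_le by metis
qed

subsection \<open>The lower bound\<close>

lemma sum_le_3_eq_card_levels:
  assumes "finite V" and "\<forall>v\<in>V. f v \<le> (3::nat)"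
  shows "sum f V = card {v\<in>V. 1 \<le> f v} + card {v\<in>V. 2 \<le> f v} + card {v\<in>V. f v = 3}"
proof -
  have "sum f V = (\<Sum>v\<in>V. (if 1 \<le> f v then 1 else 0) + (if 2 \<le> f v then 1 else 0)
                          + (if f v = 3 then 1 else 0))"
  proof (rule sum.cong)
    fix v assume "v \<in> V"
    with assms(2) show "f v = (if 1 \<le> f v then 1 else 0) + (if 2 \<le> f v then 1 else 0)
                          + (if f v = 3 then 1 else 0)"
      by auto
  qed simp
  also have "\<dots> = card {v\<in>V. 1 \<le> f v} + card {v\<in>V. 2 \<le> f v} + card {v\<in>V. f v = 3}"
    by (simp add: sum.distrib assms(1) flip: sum.inter_filter)
  finally show ?thesis .
qed

lemma rdrd_zero_has_big_nbr:
  assumes "rdrd_function V E f" and "z \<in> V" and "f z = 0"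
  shows "\<exists>u\<in>nbrs V E z. 2 \<le> f u"
proof -
  have "2 \<le> card {u\<in>nbrs V E z. f u = 2} \<or> (\<exists>u\<in>nbrs V E z. f u = 3)"
    using assms unfolding rdrd_function_def by simp
  then show ?thesis
  proof
    assume "2 \<le> card {u\<in>nbrs V E z. f u = 2}"
    then obtain u where "u \<in> nbrs V E z" "f u = 2"
      using card_ge_2_obtain_other[of "{u\<in>nbrs V E z. f u = 2}" z] by blast
    then show ?thesis by (intro bexI[of _ u]) simp_all
  qed force
qed

lemma rdrd_restrained_dominating:
  assumes f: "rdrd_function V E f"
  shows "restrained_dominating_set V E {v\<in>V. 1 \<le> f v}"
  unfolding restrained_dominating_set_iff
proof (intro conjI ballI)
  fix z assume "z \<in> V - {v\<in>V. 1 \<le> f v}"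
  then have z: "z \<in> V" "f z = 0" by auto
  obtain u where u: "u \<in> nbrs V E z" "2 \<le> f u"
    using rdrd_zero_has_big_nbr[OF f z] by blast
  then show "\<exists>u\<in>nbrs V E z. u \<in> {v\<in>V. 1 \<le> f v}"
    using nbrs_in_V[OF u(1)] by auto
  obtain w where "w \<in> nbrs V E z" "f w = 0"
    using f z unfolding rdrd_function_def by blast
  then show "\<exists>u\<in>nbrs V E z. u \<notin> {v\<in>V. 1 \<le> f v}" by (intro bexI[of _ w]) simp_all
qed auto

lemma rdrd_dominating:
  assumes f: "rdrd_function V E f"
  shows "dominating_set V E {v\<in>V. 2 \<le> f v}"
  unfolding dominating_set_iff
proof (intro conjI ballI)
  fix z assume "z \<in> V - {v\<in>V. 2 \<le> f v}"
  then have "z \<in> V" "f z = 0 \<or> f z = 1" by auto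
  then obtain u where u: "u \<in> nbrs V E z" "2 \<le> f u"
    using rdrd_zero_has_big_nbr[OF f] f unfolding rdrd_function_def by blast
  then show "\<exists>u\<in>nbrs V E z. u \<in> {v\<in>V. 2 \<le> f v}"
    using nbrs_in_V[OF u(1)] by auto
qed auto

lemma rdrd_sum_ge:
  assumes "finite V" and f: "rdrd_function V E f"
  shows "domination_number V E + restrained_domination_number V E + card {v\<in>V. f v = 3}
           \<le> sum f V"
proof -
  have "\<forall>v\<in>V. f v \<le> 3" using f by (simp add: rdrd_function_def)
  then show ?thesis
    using sum_le_3_eq_card_levels[OF assms(1)]
      domination_number_le[OF rdrd_dominating[OF f]]
      restrained_domination_number_le[OF rdrd_restrained_dominating[OF f]]
    by fastforce
qed

subsection \<open>Upper bounds\<close>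

lemma rdrd_function_of_restrained_2dominating:
  assumes "restrained_2dominating_set V E S"
  shows "rdrd_function V E (\<lambda>v. if v \<in> S then 2 else 0)"
  unfolding rdrd_function_def
proof (intro conjI ballI impI)
  fix v assume "v \<in> V" "(if v \<in> S then 2 else 0) = (0::nat)"
  then have v: "v \<in> V - S" by (auto split: if_splits)
  have "{u\<in>nbrs V E v. (if u \<in> S then 2 else 0) = (2::nat)} = nbrs V E v \<inter> S" by auto
  then show "2 \<le> card {u\<in>nbrs V E v. (if u \<in> S then 2 else 0) = (2::nat)} \<or>
             (\<exists>u\<in>nbrs V E v. (if u \<in> S then 2 else 0) = (3::nat))"
    using assms v unfolding restrained_2dominating_set_def by simp
  show "\<exists>u\<in>nbrs V E v. (if u \<in> S then 2 else 0) = (0::nat)"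
    using assms v unfolding restrained_2dominating_set_def by auto
qed (auto split: if_splits)

lemma rdrd_number_le_restrained_2domination:
  assumes "finite V"
  shows "rdrd_number V E \<le> 2 * restrained_2domination_number V E"
proof -
  obtain S where S: "restrained_2dominating_set V E S"
    and card_S: "card S = restrained_2domination_number V E"
    using ex_min_restrained_2dominating_set[OF assms] by blast
  have "S \<subseteq> V" using S by (simp add: restrained_2dominating_set_def)
  then have "(\<Sum>v\<in>V. if v \<in> S then 2 else 0) = 2 * card S"
    using assms by (simp add: sum.If_cases Int_absorb1)
  then show ?thesis
    using rdrd_number_le[OF rdrd_function_of_restrained_2dominating[OF S]] card_S by simp
qed

lemma star_leaf_nbrs:
  assumes "E = {{c, v} | v. v \<in> V - {c}}" and "c \<in> V" and "w \<in> V" and "w \<noteq> c"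
  shows "nbrs V E w = {c}"
  using assms by (auto simp: nbrs_def adj_def doubleton_eq_iff)

lemma star_restrained_domination_number:
  assumes "graph V E" and "is_star V E m"
  shows "restrained_domination_number V E = card V"
proof -
  obtain c where c: "c \<in> V" and E: "E = {{c, v} | v. v \<in> V - {c}}"
    using assms(2) unfolding is_star_def by blast
  have fin: "finite V" using assms(1) by (simp add: graph_def)
  obtain S where S: "restrained_dominating_set V E S"
    and card_S: "card S = restrained_domination_number V E"
    using ex_min_restrained_dominating_set[OF fin] by blast
  have leaf_in_S: "w \<in> S" if w: "w \<in> V" "w \<noteq> c" for w
  proof (rule ccontr)
    assume "w \<notin> S"
    then have "\<exists>u\<in>nbrs V E w. u \<in> S" "\<exists>u\<in>nbrs V E w. u \<notin> S"
      using restrained_dominating_set_nbr_in[OF S w(1)] restrained_dominating_set_nbr_out[OF S w(1)]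
      by blast+
    then show False using star_leaf_nbrs[OF E c w] by auto
  qed
  have "c \<in> S"
  proof (rule ccontr)
    assume "c \<notin> S"
    have "\<exists>u\<in>nbrs V E c. u \<notin> S"
      using restrained_dominating_set_nbr_out[OF S c] \<open>c \<notin> S\<close> by simp
    then obtain w where w: "w \<in> nbrs V E c" "w \<notin> S" by blast
    then show False using leaf_in_S nbrs_in_V[OF w(1)] nbrs_irrefl[OF assms(1) w(1)] by blast
  qed
  then have "S = V" using S leaf_in_S unfolding restrained_dominating_set_iff by blast
  then show ?thesis using card_S by simp
qed

lemma rdrd_number_le_star:
  assumes "graph V E" and "is_star V E m"
  shows "rdrd_number V E \<le> domination_number V E + restrained_domination_number V E"
proof -
  obtain c where c: "c \<in> V" and E: "E = {{c, v} | v. v \<in> V - {c}}"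
    using assms(2) unfolding is_star_def by blast
  have fin: "finite V" using assms(1) by (simp add: graph_def)
  define f where "f v = (if v = c then 2 else 1::nat)" for v
  have "rdrd_function V E f"
    using star_leaf_nbrs[OF E c] c unfolding rdrd_function_def f_def by auto
  then have "rdrd_number V E \<le> sum f V" by (rule rdrd_number_le)
  moreover have "sum f V = card V + 1"
    using sum.remove[OF fin c, of f] c fin card_gt_0_iff[of V] by (auto simp: f_def)
  moreover have "1 \<le> domination_number V E"
  proof -
    obtain S where S: "dominating_set V E S" "card S = domination_number V E"
      using ex_min_dominating_set[OF fin] by blast
    have "finite S" using S(1) fin finite_subset unfolding dominating_set_def by blast
    moreover have "S \<noteq> {}" using S(1) c unfolding dominating_set_def by blast
    ultimately show ?thesis using S(2) card_gt_0_iff[of S] by simp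
  qed
  ultimately show ?thesis
    using star_restrained_domination_number[OF assms] by linarith
qed

subsection \<open>Minimum RDRD functions attaining the lower bound\<close>

locale tight_rdrd =
  fixes V :: "'a set" and E :: "'a set set" and f :: "'a \<Rightarrow> nat"
  assumes graph: "graph V E"
    and rdrd: "rdrd_function V E f"
    and le_2: "\<And>v. v \<in> V \<Longrightarrow> f v \<le> 2"
    and min_restrained: "\<And>S. restrained_dominating_set V E S \<Longrightarrow> card {v\<in>V. 1 \<le> f v} \<le> card S"
    and min_dominating: "\<And>S. dominating_set V E S \<Longrightarrow> card {v\<in>V. 2 \<le> f v} \<le> card S"
begin

abbreviation V12 :: "'a set" where "V12 \<equiv> {v\<in>V. 1 \<le> f v}"

abbreviation V2 :: "'a set" where "V2 \<equiv> {v\<in>V. 2 \<le> f v}"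

lemma finite_V: "finite V"
  using graph by (simp add: graph_def)

lemma value_cases: "v \<in> V \<Longrightarrow> f v = 0 \<or> f v = 1 \<or> f v = 2"
  using le_2[of v] by auto

lemma zero_has_zero_nbr: "z \<in> V \<Longrightarrow> f z = 0 \<Longrightarrow> \<exists>x\<in>nbrs V E z. f x = 0"
  using rdrd unfolding rdrd_function_def by auto

lemma zero_has_other_two_nbr:
  assumes "z \<in> V" and "f z = 0"
  shows "\<exists>x\<in>nbrs V E z. f x = 2 \<and> x \<noteq> a"
proof -
  have "2 \<le> card {u\<in>nbrs V E z. f u = 2} \<or> (\<exists>u\<in>nbrs V E z. f u = 3)"
    using rdrd assms unfolding rdrd_function_def by simp
  moreover have "f u \<noteq> 3" if "u \<in> nbrs V E z" for u
    using le_2[OF nbrs_in_V[OF that]] by simp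
  ultimately have "2 \<le> card {u\<in>nbrs V E z. f u = 2}" by blast
  then obtain x where "x \<in> {u\<in>nbrs V E z. f u = 2}" "x \<noteq> a"
    using card_ge_2_obtain_other[of "{u\<in>nbrs V E z. f u = 2}" a] by blast
  then show ?thesis by blast
qed

lemma one_has_two_nbr: "v \<in> V \<Longrightarrow> f v = 1 \<Longrightarrow> \<exists>x\<in>nbrs V E v. f x = 2"
  using rdrd le_2 nbrs_in_V unfolding rdrd_function_def by (metis le_antisym)

text \<open>The hypotheses say that V12 - X is restrained dominating, contradicting the
  minimality of V12.\<close>

lemma no_removable_subset:
  assumes "X \<subseteq> V12" and "X \<noteq> {}"
    and in_nbr: "\<And>z. z \<in> X \<Longrightarrow> \<exists>a\<in>nbrs V E z. a \<in> V12 - X"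
    and out_nbr: "\<And>z. z \<in> X \<Longrightarrow> \<exists>b\<in>nbrs V E z. b \<notin> V12 - X"
    and zero_nbr: "\<And>z. z \<in> V \<Longrightarrow> f z = 0 \<Longrightarrow> \<exists>a\<in>nbrs V E z. a \<in> V12 - X"
  shows False
proof -
  have "restrained_dominating_set V E (V12 - X)"
    unfolding restrained_dominating_set_iff
  proof (intro conjI ballI)
    fix z assume z: "z \<in> V - (V12 - X)"
    show "\<exists>a\<in>nbrs V E z. a \<in> V12 - X"
      using z in_nbr zero_nbr by (cases "z \<in> X") auto
    show "\<exists>b\<in>nbrs V E z. b \<notin> V12 - X"
    proof (cases "z \<in> X")
      case False
      with z have "z \<in> V" "f z = 0" by auto
      then obtain b where "b \<in> nbrs V E z" "f b = 0" using zero_has_zero_nbr by blast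
      then show ?thesis by (intro bexI[of _ b]) simp_all
    qed (rule out_nbr)
  qed auto
  then have "card V12 \<le> card (V12 - X)" by (rule min_restrained)
  moreover have "card (V12 - X) < card V12"
    using assms(1,2) finite_V by (intro psubset_card_mono) auto
  ultimately show False by simp
qed

text \<open>The vertices of value 1 having a neighbour of value 0 or 1 can all be removed
  from V12 at once.\<close>

lemma nbr_of_one_is_two:
  assumes v: "v \<in> V" "f v = 1" and y: "y \<in> nbrs V E v"
  shows "f y = 2"
proof (rule ccontr)
  assume "f y \<noteq> 2"
  define X where "X = {w\<in>V. f w = 1 \<and> (\<exists>y\<in>nbrs V E w. f y \<noteq> 2)}"
  have "v \<in> X" using v y \<open>f y \<noteq> 2\<close> by (auto simp: X_def)
  show False
  proof (rule no_removable_subset[of X])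
    show "X \<subseteq> V12" and "X \<noteq> {}" using \<open>v \<in> X\<close> by (auto simp: X_def)
  next
    fix z assume "z \<in> X"
    then have z: "z \<in> V" "f z = 1" by (auto simp: X_def)
    obtain a where a: "a \<in> nbrs V E z" "f a = 2" using one_has_two_nbr[OF z] by blast
    then show "\<exists>a\<in>nbrs V E z. a \<in> V12 - X"
      using nbrs_in_V[OF a(1)] by (intro bexI[of _ a]) (auto simp: X_def)
    obtain b where b: "b \<in> nbrs V E z" "f b \<noteq> 2" using \<open>z \<in> X\<close> by (auto simp: X_def)
    have "b \<notin> V12 - X"
    proof (cases "f b = 0")
      case False
      then have "f b = 1" using value_cases[OF nbrs_in_V[OF b(1)]] b(2) by simp
      moreover have "z \<in> nbrs V E b" using nbrs_sym[OF b(1) z(1)] .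
      ultimately have "b \<in> X" using nbrs_in_V[OF b(1)] z(2) unfolding X_def by force
      then show ?thesis by simp
    qed simp
    then show "\<exists>b\<in>nbrs V E z. b \<notin> V12 - X" using b(1) by blast
  next
    fix z assume "z \<in> V" "f z = 0"
    then obtain a where a: "a \<in> nbrs V E z" "f a = 2"
      using zero_has_other_two_nbr by blast
    then show "\<exists>a\<in>nbrs V E z. a \<in> V12 - X"
      using nbrs_in_V[OF a(1)] by (intro bexI[of _ a]) (auto simp: X_def)
  qed
qed

lemma nbr_of_nbr_of_one_nonzero:
  assumes v: "v \<in> V" "f v = 1" and u: "u \<in> nbrs V E v" and z: "z \<in> nbrs V E u"
  shows "f z \<noteq> 0"
proof
  assume "f z = 0"
  have "f u = 2" using nbr_of_one_is_two[OF v u] .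
  have "v \<in> nbrs V E u" using nbrs_sym[OF u v(1)] .
  show False
  proof (rule no_removable_subset[of "{u}"])
    show "{u} \<subseteq> V12" using nbrs_in_V[OF u] \<open>f u = 2\<close> by simp
  next
    fix w assume "w \<in> {u}"
    then show "\<exists>a\<in>nbrs V E w. a \<in> V12 - {u}"
      using \<open>v \<in> nbrs V E u\<close> v \<open>f u = 2\<close> by (intro bexI[of _ v]) auto
    show "\<exists>b\<in>nbrs V E w. b \<notin> V12 - {u}"
      using \<open>w \<in> {u}\<close> z \<open>f z = 0\<close> by (intro bexI[of _ z]) auto
  next
    fix w assume "w \<in> V" "f w = 0"
    then obtain a where a: "a \<in> nbrs V E w" "f a = 2" "a \<noteq> u"
      using zero_has_other_two_nbr by blast
    then show "\<exists>a\<in>nbrs V E w. a \<in> V12 - {u}"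
      using nbrs_in_V[OF a(1)] by (intro bexI[of _ a]) auto
  qed simp
qed

lemma dominating_V2_remove:
  assumes x: "x \<in> V" "f x = 2" and u: "u \<in> nbrs V E x" "f u = 2"
    and no_one: "\<forall>y\<in>nbrs V E x. f y \<noteq> 1"
  shows "dominating_set V E (V2 - {x})"
  unfolding dominating_set_iff
proof (intro conjI ballI)
  fix z assume z: "z \<in> V - (V2 - {x})"
  show "\<exists>a\<in>nbrs V E z. a \<in> V2 - {x}"
  proof (cases "z = x")
    case True
    then show ?thesis
      using u nbrs_in_V[OF u(1)] nbrs_irrefl[OF graph u(1)] by (intro bexI[of _ u]) auto
  next
    case False
    then have "f z = 0 \<or> f z = 1" using z value_cases by fastforce
    then obtain a where a: "a \<in> nbrs V E z" "f a = 2" "a \<noteq> x"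
    proof
      assume "f z = 0"
      then show ?thesis using that zero_has_other_two_nbr z by blast
    next
      assume "f z = 1"
      then obtain a where a: "a \<in> nbrs V E z" "f a = 2" using one_has_two_nbr z by blast
      have "a \<noteq> x" using no_one nbrs_sym[OF a(1)] z \<open>f z = 1\<close> by blast
      then show ?thesis using that a by blast
    qed
    then show ?thesis using nbrs_in_V[OF a(1)] by (intro bexI[of _ a]) auto
  qed
qed auto

lemma nbr_of_nbr_of_one_not_two:
  assumes v: "v \<in> V" "f v = 1" and u: "u \<in> nbrs V E v" and x: "x \<in> nbrs V E u"
  shows "f x \<noteq> 2"
proof
  assume "f x = 2"
  have "f u = 2" using nbr_of_one_is_two[OF v u] .
  have xV: "x \<in> V" and uV: "u \<in> V" using nbrs_in_V[OF x] nbrs_in_V[OF u] .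
  have ux: "u \<in> nbrs V E x" and vu: "v \<in> nbrs V E u"
    using nbrs_sym[OF x uV] nbrs_sym[OF u v(1)] .
  show False
  proof (cases "\<exists>y\<in>nbrs V E x. f y = 1")
    case True
    then obtain y where y: "y \<in> nbrs V E x" "f y = 1" by blast
    have "y \<in> V" using nbrs_in_V[OF y(1)] .
    have xy: "x \<in> nbrs V E y" using nbrs_sym[OF y(1) xV] .
    show False
    proof (rule no_removable_subset[of "{u, x}"])
      show "{u, x} \<subseteq> V12" using uV xV \<open>f u = 2\<close> \<open>f x = 2\<close> by simp
    next
      fix z assume "z \<in> {u, x}"
      then show "\<exists>a\<in>nbrs V E z. a \<in> V12 - {u, x}"
        using vu v y \<open>y \<in> V\<close> \<open>f u = 2\<close> \<open>f x = 2\<close> by auto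
      show "\<exists>b\<in>nbrs V E z. b \<notin> V12 - {u, x}"
        using \<open>z \<in> {u, x}\<close> ux x by auto
    next
      fix z assume z: "z \<in> V" "f z = 0"
      then obtain a where a: "a \<in> nbrs V E z" "f a = 2" using zero_has_other_two_nbr by blast
      have "z \<in> nbrs V E a" using nbrs_sym[OF a(1) z(1)] .
      then have "a \<noteq> u" and "a \<noteq> x"
        using nbr_of_nbr_of_one_nonzero[OF v u] nbr_of_nbr_of_one_nonzero[OF \<open>y \<in> V\<close> y(2) xy]
          z(2) by blast+
      then show "\<exists>a\<in>nbrs V E z. a \<in> V12 - {u, x}"
        using a nbrs_in_V[OF a(1)] by (intro bexI[of _ a]) auto
    qed simp
  next
    case False
    then have "dominating_set V E (V2 - {x})"
      using dominating_V2_remove[OF xV \<open>f x = 2\<close> ux \<open>f u = 2\<close>] by blast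
    then have "card V2 \<le> card (V2 - {x})" by (rule min_dominating)
    moreover have "card (V2 - {x}) < card V2"
      using finite_V xV \<open>f x = 2\<close> by (intro card_Diff1_less) simp_all
    ultimately show False by simp
  qed
qed

lemma nbr_of_nbr_of_one_is_one:
  assumes "v \<in> V" "f v = 1" "u \<in> nbrs V E v" "x \<in> nbrs V E u"
  shows "f x = 1"
  using value_cases[OF nbrs_in_V[OF assms(4)]] nbr_of_nbr_of_one_nonzero[OF assms]
    nbr_of_nbr_of_one_not_two[OF assms] by blast

lemma edge_at_one_pendant:
  assumes v: "v \<in> V" "f v = 1" and u: "u \<in> nbrs V E v"
  shows "nbrs V E v = {u} \<or> nbrs V E u = {v}"
proof (rule ccontr)
  have uV: "u \<in> V" and vu: "v \<in> nbrs V E u" using nbrs_in_V[OF u] nbrs_sym[OF u v(1)] .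
  assume "\<not> ?thesis"
  then obtain a b where a: "a \<in> nbrs V E v" "a \<noteq> u" and b: "b \<in> nbrs V E u" "b \<noteq> v"
    using u vu by blast
  have "f u = 2" "f a = 2" using nbr_of_one_is_two[OF v] u a(1) by blast+
  have "f b = 1" using nbr_of_nbr_of_one_is_one[OF v u b(1)] .
  show False
  proof (rule no_removable_subset[of "{u, v}"])
    show "{u, v} \<subseteq> V12" using uV v \<open>f u = 2\<close> by simp
  next
    have "b \<in> V12 - {u, v}"
      using nbrs_in_V[OF b(1)] nbrs_irrefl[OF graph b(1)] b(2) \<open>f b = 1\<close> by simp
    moreover have "a \<in> V12 - {u, v}"
      using nbrs_in_V[OF a(1)] nbrs_irrefl[OF graph a(1)] a(2) \<open>f a = 2\<close> by simp
    moreover fix z assume "z \<in> {u, v}"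
    ultimately show "\<exists>a\<in>nbrs V E z. a \<in> V12 - {u, v}" using a(1) b(1) by blast
    show "\<exists>b\<in>nbrs V E z. b \<notin> V12 - {u, v}" using \<open>z \<in> {u, v}\<close> u vu by blast
  next
    fix z assume z: "z \<in> V" "f z = 0"
    then obtain w where w: "w \<in> nbrs V E z" "f w = 2" using zero_has_other_two_nbr by blast
    have "w \<noteq> u"
      using nbr_of_nbr_of_one_nonzero[OF v u] nbrs_sym[OF w(1) z(1)] z(2) by blast
    then show "\<exists>a\<in>nbrs V E z. a \<in> V12 - {u, v}"
      using w nbrs_in_V[OF w(1)] v(2) by (intro bexI[of _ w]) auto
  qed simp
qed

lemma one_gives_star_centre:
  assumes v: "v \<in> V" "f v = 1"
  shows "\<exists>c\<in>V. nbrs V E c \<noteq> {} \<and> (\<forall>w\<in>nbrs V E c. nbrs V E w = {c})"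
proof -
  obtain u where u: "u \<in> nbrs V E v" "f u = 2" using one_has_two_nbr[OF v] by blast
  have uV: "u \<in> V" and vu: "v \<in> nbrs V E u" using nbrs_in_V[OF u(1)] nbrs_sym[OF u(1) v(1)] .
  show ?thesis
  proof (cases "nbrs V E v = {u}")
    case True
    have "nbrs V E w = {u}" if w: "w \<in> nbrs V E u" for w
    proof -
      have "w \<in> V" "f w = 1" "u \<in> nbrs V E w"
        using nbrs_in_V[OF w] nbr_of_nbr_of_one_is_one[OF v u(1) w] nbrs_sym[OF w uV] .
      then have "nbrs V E w = {u} \<or> nbrs V E u = {w}" by (rule edge_at_one_pendant)
      then show ?thesis using vu True by auto
    qed
    then show ?thesis using uV vu by blast
  next
    case False
    then have "nbrs V E w = {v}" if "w \<in> nbrs V E v" for w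
      using edge_at_one_pendant[OF v that] u(1) by auto
    then show ?thesis using v(1) u(1) by blast
  qed
qed

end

subsection \<open>The cases of equality\<close>

lemma is_star_of_centre:
  assumes G: "connected_graph V E" and c: "c \<in> V" and "nbrs V E c \<noteq> {}"
    and leaves: "\<forall>w\<in>nbrs V E c. nbrs V E w = {c}"
  shows "\<exists>m\<ge>1. is_star V E m"
proof -
  have graph: "graph V E" and fin: "finite V" using G by (simp_all add: connected_graph_def graph_def)
  have reach: "w \<in> insert c (nbrs V E c)" if "(adj E)\<^sup>*\<^sup>* c w" for w
    using that
  proof (induction rule: rtranclp_induct)
    case (step y z)
    have "{y, z} \<in> E" using step.hyps(2) by (simp add: adj_def)
    then have "z \<in> V" using graph by (auto simp: graph_def)
    then have "z \<in> nbrs V E y" using step.hyps(2) by (simp add: nbrs_def)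
    then show ?case using step.IH leaves by auto
  qed simp
  have leaf: "nbrs V E w = {c}" if "w \<in> V" "w \<noteq> c" for w
  proof -
    have "(adj E)\<^sup>*\<^sup>* c w" using G c \<open>w \<in> V\<close> unfolding connected_graph_def by blast
    then have "w \<in> nbrs V E c" using \<open>w \<noteq> c\<close> by (auto dest: reach)
    then show ?thesis using leaves by simp
  qed
  have "E = {{c, w} | w. w \<in> V - {c}}"
  proof (intro equalityI subsetI)
    fix e assume "e \<in> E"
    then have "e \<subseteq> V" "card e = 2" using graph unfolding graph_def by blast+
    then obtain a b where ab: "e = {a, b}" "a \<noteq> b" "a \<in> V" "b \<in> V"
      by (auto simp: card_2_iff)
    then have "b \<in> nbrs V E a" using \<open>e \<in> E\<close> by (simp add: nbrs_def adj_def)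
    then have "a = c \<or> b = c" using leaf[OF ab(3)] by blast
    then show "e \<in> {{c, w} | w. w \<in> V - {c}}" using ab by (auto simp: insert_commute)
  next
    fix e assume "e \<in> {{c, w} | w. w \<in> V - {c}}"
    then obtain w where w: "e = {c, w}" "w \<in> V" "w \<noteq> c" by blast
    then have "c \<in> nbrs V E w" using leaf by simp
    then show "e \<in> E" using w(1) by (simp add: nbrs_def adj_def insert_commute)
  qed
  moreover obtain w where "w \<in> nbrs V E c" using \<open>nbrs V E c \<noteq> {}\<close> by blast
  then have "w \<noteq> c" and "card {c, w} \<le> card V"
    using fin c nbrs_in_V[of w V E c] nbrs_irrefl[OF graph] by (auto intro!: card_mono)
  ultimately show ?thesis
    using c unfolding is_star_def by (intro exI[of _ "card V - 1"]) auto
qed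

lemma restrained_2dominating_of_rdrd_0_2:
  assumes f: "rdrd_function V E f" and f_0_2: "\<forall>v\<in>V. f v = 0 \<or> f v = 2"
  shows "restrained_2dominating_set V E {v\<in>V. 2 \<le> f v}"
  unfolding restrained_2dominating_set_def
proof (intro conjI ballI)
  fix z assume "z \<in> V - {v\<in>V. 2 \<le> f v}"
  then have z: "z \<in> V" "f z = 0" using f_0_2 by auto
  have no_3: "f u \<noteq> 3" and "u \<in> V" if "u \<in> nbrs V E z" for u
    using f_0_2 nbrs_in_V[OF that] by auto
  then have "{u\<in>nbrs V E z. f u = 2} = nbrs V E z \<inter> {v\<in>V. 2 \<le> f v}"
    using f_0_2 by fastforce
  then show "2 \<le> card (nbrs V E z \<inter> {v\<in>V. 2 \<le> f v})"
    using f z no_3 unfolding rdrd_function_def by auto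
  obtain w where "w \<in> nbrs V E z" "f w = 0" using f z unfolding rdrd_function_def by blast
  then show "nbrs V E z \<inter> (V - {v\<in>V. 2 \<le> f v}) \<noteq> {}"
    using nbrs_in_V[of w V E z] by auto
qed auto

lemma rdrd_tight_cases:
  assumes G: "connected_graph V E" and f: "rdrd_function V E f"
    and tight: "sum f V = domination_number V E + restrained_domination_number V E"
  shows "(\<exists>m\<ge>1. is_star V E m) \<or>
         (restrained_2domination_number V E = restrained_domination_number V E \<and>
          restrained_domination_number V E = domination_number V E)"
proof -
  have graph: "graph V E" and fin: "finite V"
    using G by (simp_all add: connected_graph_def graph_def)
  have le_3: "\<forall>v\<in>V. f v \<le> 3" using f by (simp add: rdrd_function_def)
  have dom: "domination_number V E \<le> card {v\<in>V. 2 \<le> f v}"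
    using domination_number_le[OF rdrd_dominating[OF f]] .
  have rdom: "restrained_domination_number V E \<le> card {v\<in>V. 1 \<le> f v}"
    using restrained_domination_number_le[OF rdrd_restrained_dominating[OF f]] .
  have "card {v\<in>V. f v = 3} = 0" and dom_eq: "domination_number V E = card {v\<in>V. 2 \<le> f v}"
    and rdom_eq: "restrained_domination_number V E = card {v\<in>V. 1 \<le> f v}"
    using sum_le_3_eq_card_levels[OF fin le_3] tight dom rdom by linarith+
  then have le_2: "f v \<le> 2" if "v \<in> V" for v
    using fin le_3 that by fastforce
  interpret tight_rdrd V E f
  proof
    fix S
    show "restrained_dominating_set V E S \<Longrightarrow> card {v\<in>V. 1 \<le> f v} \<le> card S"
      using restrained_domination_number_le[of V E S] rdom_eq by simp
    show "dominating_set V E S \<Longrightarrow> card {v\<in>V. 2 \<le> f v} \<le> card S"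
      using domination_number_le[of V E S] dom_eq by simp
  qed (use graph f le_2 in auto)
  show ?thesis
  proof (cases "\<exists>v\<in>V. f v = 1")
    case True
    then obtain v where "v \<in> V" "f v = 1" by blast
    then obtain c where "c \<in> V" "nbrs V E c \<noteq> {}" "\<forall>w\<in>nbrs V E c. nbrs V E w = {c}"
      using one_gives_star_centre by blast
    then show ?thesis using is_star_of_centre[OF G] by blast
  next
    case False
    then have "\<forall>v\<in>V. f v = 0 \<or> f v = 2" using value_cases by blast
    then have "restrained_2domination_number V E \<le> domination_number V E"
      using restrained_2domination_number_le[OF restrained_2dominating_of_rdrd_0_2[OF f]] dom_eq
      by simp
    then show ?thesis
      using domination_number_le_restrained[OF fin, of E] restrained_domination_number_le_2[OF fin, of E]
      by linarith
  qed
qed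

theorem theorem2p8:
  fixes V :: "'a set" and E :: "'a set set"
  assumes "connected_graph V E"
  shows "rdrd_number V E \<ge> domination_number V E + restrained_domination_number V E \<and>
         (rdrd_number V E = domination_number V E + restrained_domination_number V E \<longleftrightarrow>
           (\<exists>m\<ge>1. is_star V E m) \<or>
           (restrained_2domination_number V E = restrained_domination_number V E \<and>
            restrained_domination_number V E = domination_number V E))"
proof -
  have graph: "graph V E" and fin: "finite V"
    using assms by (simp_all add: connected_graph_def graph_def)
  obtain f where f: "rdrd_function V E f" and min: "sum f V = rdrd_number V E"
    using ex_min_rdrd_function by blast
  have lower: "domination_number V E + restrained_domination_number V E \<le> rdrd_number V E"
    using rdrd_sum_ge[OF fin f] min by linarith
  have "rdrd_number V E \<le> domination_number V E + restrained_domination_number V E"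
    if "(\<exists>m\<ge>1. is_star V E m) \<or>
        (restrained_2domination_number V E = restrained_domination_number V E \<and>
         restrained_domination_number V E = domination_number V E)"
    using that rdrd_number_le_star[OF graph] rdrd_number_le_restrained_2domination[OF fin, of E]
    by auto
  moreover note rdrd_tight_cases[OF assms f]
  ultimately show ?thesis using lower min by (auto intro: antisym)
qed

end
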